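(* Let $n\ge1$ and let $\operatorname{dist}$ be a distance generating the weak-* topology on the space $\mathcal P$ of Borel probability measures on $\mathbf{T}^n=\mathbf{R}^n/\mathbf{Z}^n$. Then for every $\varepsilon>0$ there exists a locally finite family of affine hyperplanes $(H_q)_q$ of $\mathbf{R}^n$ such that for every $\eta>0$ there exists $M_0\in\mathbf{N}$ such that for every $\boldsymbol\lambda\in\mathbf{R}^n$ with $d(\boldsymbol\lambda,H_q)>\eta$ for every $q$ and every $M\ge M_0$, \[\operatorname{dist}\Big(\frac1M\sum_{m=0}^{M-1}\bar\delta_{m\boldsymbol\lambda},\ \operatorname{Leb}_{\mathbf{R}^n/\mathbf{Z}^n}\Big)<\varepsilon,\] where $\bar\delta_x$ is the Dirac measure at the projection of $x$ on $\mathbf{R}^n/\mathbf{Z}^n$.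
   Context: $\operatorname{Leb}_{\mathbf{R}^n/\mathbf{Z}^n}$ is the Haar (Lebesgue) probability measure on the torus; $d$ is the Euclidean distance in $\mathbf{R}^n$. *)

theory Defs
  imports "HOL-Analysis.Analysis" "HOL-Probability.Probability"
begin

text \<open>The torus R^n/Z^n is modelled by the fundamental domain [0,1)^n inside real^'n;
  the projection sends x to its componentwise fractional part.\<close>

definition torus_cube :: "(real^'n) set" where
  "torus_cube = {x. \<forall>i. 0 \<le> x$i \<and> x$i < 1}"

definition torus_proj :: "real^'n \<Rightarrow> real^'n" where
  "torus_proj x = (\<chi> i. frac (x$i))"

text \<open>Borel probability measures on the torus = Borel probability measures on real^'n
  concentrated on the fundamental domain.\<close>
definition torus_prob_measures :: "(real^'n) measure set" where
  "torus_prob_measures = {\<mu>. prob_space \<mu> \<and> sets \<mu> = sets borel \<and>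
                              emeasure \<mu> (UNIV - torus_cube) = 0}"

text \<open>Continuous functions on the torus = continuous Z^n-periodic functions on R^n.\<close>
definition torus_continuous :: "(real^'n \<Rightarrow> real) \<Rightarrow> bool" where
  "torus_continuous f \<longleftrightarrow> continuous_on UNIV f \<and>
     (\<forall>x k. (\<forall>i. k$i \<in> \<int>) \<longrightarrow> f (x + k) = f x)"

definition weak_star_open :: "(real^'n) measure set \<Rightarrow> bool" where
  "weak_star_open U \<longleftrightarrow> U \<subseteq> torus_prob_measures \<and>
     (\<forall>\<mu>\<in>U. \<exists>F e. finite F \<and> (\<forall>f\<in>F. torus_continuous f) \<and> e > 0 \<and>
        {\<nu>\<in>torus_prob_measures. \<forall>f\<in>F. \<bar>integral\<^sup>L \<nu> f - integral\<^sup>L \<mu> f\<bar> < e} \<subseteq> U)"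

definition torus_dirac :: "real^'n \<Rightarrow> (real^'n) measure" where
  "torus_dirac x = return borel (torus_proj x)"

text \<open>(1/M) \<Sum>_{m=0}^{M-1} \<delta>bar_{m\<lambda>}, as a Borel measure.\<close>
definition orbit_average :: "nat \<Rightarrow> real^'n \<Rightarrow> (real^'n) measure" where
  "orbit_average M v =
     distr (measure_pmf (pmf_of_set {..<M})) borel (\<lambda>m. torus_proj (real m *\<^sub>R v))"

definition torus_leb :: "(real^'n) measure" where
  "torus_leb = density lborel (indicator torus_cube)"

definition affine_hyperplane :: "(real^'n) set \<Rightarrow> bool" where
  "affine_hyperplane h \<longleftrightarrow> (\<exists>a b. a \<noteq> 0 \<and> h = {x. a \<bullet> x = b})"

definition locally_finite_family :: "(real^'n) set set \<Rightarrow> bool" where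
  "locally_finite_family Hs \<longleftrightarrow> (\<forall>x. \<exists>r>0. finite {h\<in>Hs. h \<inter> ball x r \<noteq> {}})"

end

theory Submission
  imports Defs
begin

text \<open>By Stone--Weierstrass, a weak-* neighbourhood of Lebesgue measure is controlled by finitely
  many trigonometric polynomials, hence by finitely many characters \<open>e(k \<bullet> x)\<close> with \<open>k \<in> \<int>\<^sup>n\<close>.
  For \<open>k \<noteq> 0\<close> the orbit average of such a character is a geometric sum, of modulus at most
  \<open>2 / (M \<bar>1 - e(k \<bullet> \<lambda>)\<bar>)\<close>, and \<open>\<bar>1 - e(k \<bullet> \<lambda>)\<bar>\<close> is bounded below as soon as \<open>k \<bullet> \<lambda>\<close> stays
  away from the integers, i.e. as soon as \<open>\<lambda>\<close> stays at distance \<open>\<eta>\<close> from the hyperplanes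
  \<open>k \<bullet> x = j\<close>, \<open>j \<in> \<int>\<close>. For the finitely many frequencies involved these hyperplanes form a
  locally finite family.\<close>

definition cis2pi :: "real \<Rightarrow> complex" where
  "cis2pi t = cis (2 * pi * t)"

lemma cis2pi_zero [simp]: "cis2pi 0 = 1"
  by (simp add: cis2pi_def)

lemma cis2pi_add: "cis2pi (s + t) = cis2pi s * cis2pi t"
  by (simp add: cis2pi_def cis_mult distrib_left)

lemma cis2pi_eq_1_iff: "cis2pi t = 1 \<longleftrightarrow> t \<in> \<int>"
proof
  assume "cis2pi t = 1"
  then obtain n :: int where "2 * pi * t = of_int (2 * n) * pi"
    by (auto simp: cis2pi_def cis_conv_exp exp_eq_1)
  then show "t \<in> \<int>" by simp
qed (auto simp: cis2pi_def elim: Ints_cases)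

lemma norm_cis2pi [simp]: "norm (cis2pi t) = 1"
  by (simp add: cis2pi_def)

lemma cnj_cis2pi: "cnj (cis2pi t) = cis2pi (- t)"
  by (simp add: cis2pi_def cis_cnj)

lemma cis2pi_power: "cis2pi t ^ n = cis2pi (real n * t)"
  unfolding cis2pi_def Complex.DeMoivre by (simp add: mult_ac)

lemma cis2pi_frac: "cis2pi (frac t) = cis2pi t"
  using cis2pi_add[of "frac t" "of_int \<lfloor>t\<rfloor>"] cis2pi_eq_1_iff[of "of_int \<lfloor>t\<rfloor>"]
  by (simp add: frac_def)

lemma cis2pi_eq_iff: "cis2pi s = cis2pi t \<longleftrightarrow> s - t \<in> \<int>"
  using cis2pi_add[of "s - t" t] cis2pi_eq_1_iff[of "s - t"]
  by (metis cis2pi_def cis_neq_zero diff_add_cancel mult_cancel_right1)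

lemma continuous_on_cis2pi [continuous_intros]:
  "continuous_on S f \<Longrightarrow> continuous_on S (\<lambda>x. cis2pi (f x))"
  unfolding cis2pi_def by (intro continuous_intros)

section \<open>Integrals of periodic functions over the unit cube\<close>

lemma has_integral_translate_cbox:
  fixes f :: "'a::euclidean_space \<Rightarrow> 'b::real_normed_vector"
  assumes "(f has_integral I) (cbox a b)"
  shows "((\<lambda>x. f (x + c)) has_integral I) (cbox (a - c) (b - c))"
  using has_integral_affinity'[OF assms, of 1 c] by (simp add: add.commute)

lemma has_integral_cbox_split_cart:
  fixes f :: "real^'n \<Rightarrow> 'b::real_normed_vector"
  assumes "(f has_integral I) (cbox a (\<chi> j. if j = i then c else b$j))"
    and "(f has_integral J) (cbox (\<chi> j. if j = i then c else a$j) b)"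
    and "a$i \<le> c" "c \<le> b$i"
  shows "(f has_integral (I + J)) (cbox a b)"
proof (rule has_integral_split[where k = "axis i 1" and c = c])
  show "(f has_integral I) (cbox a b \<inter> {x. x \<bullet> axis i 1 \<le> c})"
    using assms(1) interval_split_cart(1)[where a=a and b=b and k=i and c=c]
    unfolding min_absorb2[OF assms(4)] by (simp add: inner_axis interval_cbox_cart)
  show "(f has_integral J) (cbox a b \<inter> {x. c \<le> x \<bullet> axis i 1})"
    using assms(2) interval_split_cart(2)[where a=a and b=b and k=i and c=c]
    unfolding max_absorb2[OF assms(3)] by (simp add: inner_axis interval_cbox_cart)
qed (simp add: cart_eq_inner_axis)

lemma integral_unit_cube_shift_periodic:
  fixes h :: "real^'n \<Rightarrow> 'a::banach"
  assumes cont: "continuous_on UNIV h" and per: "\<And>x. h (x + axis i 1) = h x"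
    and s: "0 \<le> s" "s \<le> 1"
  shows "integral (cbox 0 1) (\<lambda>x. h (x + s *\<^sub>R axis i 1)) = integral (cbox 0 1) h"
proof -
  define cut :: "real \<Rightarrow> real^'n \<Rightarrow> real^'n" where "cut c u = (\<chi> j. if j = i then c else u$j)" for c u
  have int: "(h has_integral integral (cbox a b) h) (cbox a b)" for a b
    using cont by (intro integrable_integral integrable_continuous) (auto intro: continuous_on_subset)
  define I J where "I = integral (cbox 0 (cut s 1)) h" and "J = integral (cbox (cut s 0) 1) h"
  have "(h has_integral (I + J)) (cbox 0 1)"
    using has_integral_cbox_split_cart[OF int int, of 0 i s 1] s by (simp add: I_def J_def cut_def)
  text \<open>Split the unit cube at \<open>x$i = 1 - s\<close>; translating the two pieces by \<open>s\<close> and, using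
    periodicity, by \<open>s - 1\<close> in direction \<open>i\<close> yields the two pieces of the cut at \<open>x$i = s\<close>.\<close>
  moreover have "((\<lambda>x. h (x + s *\<^sub>R axis i 1)) has_integral (J + I)) (cbox 0 1)"
  proof (rule has_integral_cbox_split_cart[where i = i and c = "1 - s"])
    have "cut s 0 - s *\<^sub>R axis i 1 = 0" "1 - s *\<^sub>R axis i 1 = cut (1 - s) 1"
      by (simp_all add: vec_eq_iff axis_def cut_def)
    then show "((\<lambda>x. h (x + s *\<^sub>R axis i 1)) has_integral J) (cbox 0 (\<chi> j. if j = i then 1 - s else 1$j))"
      using has_integral_translate_cbox[OF int[of "cut s 0" 1], of "s *\<^sub>R axis i 1"]
      by (simp add: J_def cut_def)
    have "h (x + (s - 1) *\<^sub>R axis i 1) = h (x + s *\<^sub>R axis i 1)" for x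
      using per[of "x + (s - 1) *\<^sub>R axis i 1"] by (simp add: algebra_simps)
    moreover have "0 - (s - 1) *\<^sub>R axis i 1 = cut (1 - s) 0" "cut s 1 - (s - 1) *\<^sub>R axis i 1 = 1"
      by (simp_all add: vec_eq_iff axis_def cut_def)
    ultimately show "((\<lambda>x. h (x + s *\<^sub>R axis i 1)) has_integral I) (cbox (\<chi> j. if j = i then 1 - s else 0$j) 1)"
      using has_integral_translate_cbox[OF int[of 0 "cut s 1"], of "(s - 1) *\<^sub>R axis i 1"]
      by (simp add: I_def cut_def)
  qed (use s in auto)
  ultimately show ?thesis
    by (simp add: integral_unique add.commute)
qed

lemma content_unit_cube_cart: "Henstock_Kurzweil_Integration.content (cbox 0 (1::real^'n)) = 1"
proof -
  have "cbox 0 (1::real^'n) \<noteq> {}"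
    using mem_box_cart(2)[of 0 0 "1::real^'n"] by auto
  then show ?thesis by (simp add: content_cbox_cart)
qed

lemma integral_unit_cube_character:
  fixes k :: "real^'n"
  assumes k: "\<And>j. k$j \<in> \<int>"
  shows "integral (cbox 0 1) (\<lambda>x. cis2pi (k \<bullet> x)) = (if k = 0 then 1 else 0)"
proof (cases "k = 0")
  case True
  then show ?thesis by (simp add: content_unit_cube_cart)
next
  case False
  then obtain i where "k$i \<noteq> 0" by (auto simp: vec_eq_iff)
  moreover obtain m :: int where "k$i = of_int m" using k[of i] by (auto elim: Ints_cases)
  ultimately have ki: "\<bar>k$i\<bar> \<ge> 1" by simp
  text \<open>A translation by half a period of the \<open>i\<close>-th frequency flips the sign of the character.\<close>
  define s where "s = 1 / (2 * \<bar>k$i\<bar>)"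
  define h where "h = (\<lambda>x. cis2pi (k \<bullet> x))"
  have "h (x + s *\<^sub>R axis i 1) = h x * cis2pi (k$i * s)" for x
    by (simp add: h_def inner_add_right inner_axis cis2pi_add mult.commute)
  moreover have "k$i * s = 1/2 \<or> k$i * s = - 1/2"
    using ki by (auto simp: s_def abs_if field_simps)
  moreover have "cis2pi (1/2) = -1" "cis2pi (- 1/2) = -1"
    by (simp_all add: cis2pi_def complex_eq_iff)
  ultimately have "h (x + s *\<^sub>R axis i 1) = - h x" for x
    by (metis mult_minus1_right)
  moreover have "h (x + axis i 1) = h x" for x
    using k cis2pi_eq_1_iff by (simp add: h_def inner_add_right inner_axis cis2pi_add)
  moreover have "continuous_on UNIV h"
    unfolding h_def by (intro continuous_intros)
  ultimately have "integral (cbox 0 1) (\<lambda>x. - h x) = integral (cbox 0 1) h"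
    using integral_unit_cube_shift_periodic[of h i s] ki by (simp add: s_def)
  then show ?thesis
    using False by (simp add: h_def)
qed

section \<open>Lebesgue measure and orbit averages on the torus\<close>

lemma torus_proj_in_cube: "torus_proj x \<in> torus_cube"
  by (simp add: torus_proj_def torus_cube_def frac_lt_1)

lemma torus_continuous_proj:
  assumes "torus_continuous f"
  shows "f (torus_proj x) = f x"
proof -
  have "torus_proj x = x + (\<chi> i. - of_int \<lfloor>x$i\<rfloor>)"
    by (simp add: torus_proj_def vec_eq_iff frac_def)
  then show ?thesis
    using assms by (simp add: torus_continuous_def)
qed

lemma torus_cube_borel [measurable]: "torus_cube \<in> sets borel"
  unfolding torus_cube_def by measurable

lemma torus_cube_ae_cbox: "torus_cube \<subseteq> cbox 0 1" "negligible (cbox 0 1 - torus_cube)"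
proof -
  show "torus_cube \<subseteq> cbox 0 1"
    by (auto simp: torus_cube_def mem_box_cart less_imp_le)
  have "cbox 0 1 - torus_cube \<subseteq> (\<Union>i. {x::real^'n. x \<bullet> axis i 1 = 1})"
    by (auto simp: torus_cube_def mem_box_cart less_le inner_axis)
  moreover have "negligible (\<Union>i. {x::real^'n. x \<bullet> axis i 1 = 1})"
    by (intro negligible_Union negligible_standard_hyperplane) auto
  ultimately show "negligible (cbox 0 1 - torus_cube)"
    using negligible_subset by blast
qed

lemma has_integral_torus_cube_iff:
  fixes f :: "real^'n \<Rightarrow> 'a::banach"
  shows "(f has_integral y) torus_cube \<longleftrightarrow> (f has_integral y) (cbox 0 1)"
  by (rule has_integral_spike_set_eq) (use torus_cube_ae_cbox in \<open>auto intro: negligible_subset\<close>)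

lemma emeasure_torus_cube: "emeasure lborel (torus_cube :: (real^'n) set) = 1"
proof -
  have "((\<lambda>x. 1::real) has_integral 1) (cbox 0 (1::real^'n))"
    using has_integral_const[of "1::real" 0 "1::real^'n"] by (simp add: content_unit_cube_cart)
  then have "((\<lambda>x. 1::real) has_integral 1) (torus_cube :: (real^'n) set)"
    using has_integral_torus_cube_iff by blast
  then show ?thesis
    by (subst (asm) has_integral_iff_emeasure_lborel) auto
qed

lemma torus_leb_in_torus_prob_measures: "torus_leb \<in> torus_prob_measures"
proof -
  have "emeasure torus_leb (UNIV :: (real^'n) set) = 1"
    by (simp add: torus_leb_def emeasure_density emeasure_torus_cube)
  moreover have "emeasure torus_leb (UNIV - torus_cube) = 0"
    by (simp add: torus_leb_def emeasure_density flip: indicator_inter_arith)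
  ultimately show ?thesis
    by (auto simp: torus_prob_measures_def torus_leb_def intro!: prob_spaceI)
qed

lemma integral_torus_leb:
  fixes f :: "real^'n \<Rightarrow> real"
  assumes cont: "continuous_on UNIV f"
  shows "integral\<^sup>L torus_leb f = integral (cbox 0 1) f"
proof -
  have [measurable]: "f \<in> borel_measurable borel"
    using cont by (rule borel_measurable_continuous_onI)
  have "f absolutely_integrable_on cbox 0 1"
    using cont by (intro absolutely_integrable_continuous) (auto intro: continuous_on_subset)
  then have f: "set_integrable lebesgue torus_cube f"
    by (rule set_integrable_subset) (use torus_cube_ae_cbox in auto)
  have "integral\<^sup>L torus_leb f = integral\<^sup>L lborel (\<lambda>x. indicator torus_cube x *\<^sub>R f x)"
    unfolding torus_leb_def by (subst integral_density[symmetric]) (auto simp: ennreal_indicator)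
  also have "\<dots> = (LINT x:torus_cube | lebesgue. f x)"
    by (simp add: integral_completion set_lebesgue_integral_def)
  also have "\<dots> = integral torus_cube f"
    using set_lebesgue_integral_eq_integral(2)[OF f] .
  also have "\<dots> = integral (cbox 0 1) f"
    by (rule integral_spike_set) (use torus_cube_ae_cbox in \<open>auto intro: negligible_subset\<close>)
  finally show ?thesis .
qed

definition orbit_mean :: "nat \<Rightarrow> (real^'n \<Rightarrow> 'a::real_normed_vector) \<Rightarrow> real^'n \<Rightarrow> 'a" where
  "orbit_mean M f v = (\<Sum>m<M. f (real m *\<^sub>R v)) /\<^sub>R real M"

lemma orbit_mean_add: "orbit_mean M (\<lambda>x. f x + g x) v = orbit_mean M f v + orbit_mean M g v"
  by (simp add: orbit_mean_def sum.distrib scaleR_add_right)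

lemma orbit_mean_linear:
  assumes "linear L"
  shows "orbit_mean M (\<lambda>x. L (f x)) v = L (orbit_mean M f v)"
  by (simp add: orbit_mean_def linear_sum[OF assms] linear_scale[OF assms])

lemma orbit_mean_const: "M > 0 \<Longrightarrow> orbit_mean M (\<lambda>x. c) v = c"
  by (simp add: orbit_mean_def sum_constant_scaleR)

lemma norm_orbit_mean_diff_le:
  assumes "\<And>x. norm (f x - g x) \<le> e" "M > 0"
  shows "norm (orbit_mean M f v - orbit_mean M g v) \<le> e"
proof -
  have "norm (\<Sum>m<M. f (real m *\<^sub>R v) - g (real m *\<^sub>R v)) \<le> (\<Sum>m<M. e)"
    using assms(1) by (intro sum_norm_le)
  moreover have "orbit_mean M f v - orbit_mean M g v
      = (\<Sum>m<M. f (real m *\<^sub>R v) - g (real m *\<^sub>R v)) /\<^sub>R real M"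
    by (simp add: orbit_mean_def sum_subtractf scaleR_diff_right)
  ultimately show ?thesis
    using assms(2) by (simp add: field_simps)
qed

lemma orbit_average_in_torus_prob_measures:
  assumes "M > 0"
  shows "orbit_average M v \<in> torus_prob_measures"
proof -
  have "prob_space (orbit_average M v)"
    unfolding orbit_average_def by (intro prob_space.prob_space_distr prob_space_measure_pmf) simp
  moreover have "emeasure (orbit_average M v) (UNIV - torus_cube) = 0"
    by (simp add: orbit_average_def emeasure_distr vimage_def torus_proj_in_cube)
  ultimately show ?thesis
    by (simp add: torus_prob_measures_def orbit_average_def)
qed

lemma integral_orbit_average:
  assumes "M > 0" "torus_continuous f"
  shows "integral\<^sup>L (orbit_average M v) f = orbit_mean M f v"
proof -
  have "f \<in> borel_measurable borel"
    using assms(2) by (intro borel_measurable_continuous_onI) (simp add: torus_continuous_def)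
  then have "integral\<^sup>L (orbit_average M v) f = (\<Sum>m<M. f (torus_proj (real m *\<^sub>R v))) / real M"
    using assms(1) by (simp add: orbit_average_def integral_distr, subst integral_pmf_of_set) auto
  then show ?thesis
    unfolding torus_continuous_proj[OF assms(2)] orbit_mean_def by (simp add: divide_inverse_commute)
qed

section \<open>Trigonometric polynomials\<close>

inductive trig_poly :: "(real^'n \<Rightarrow> complex) \<Rightarrow> bool" where
  character: "(\<And>j. k$j \<in> \<int>) \<Longrightarrow> trig_poly (\<lambda>x. cis2pi (k \<bullet> x))"
| scale: "trig_poly p \<Longrightarrow> trig_poly (\<lambda>x. c * p x)"
| add: "trig_poly p \<Longrightarrow> trig_poly q \<Longrightarrow> trig_poly (\<lambda>x. p x + q x)"

lemma trig_poly_const: "trig_poly (\<lambda>x. c)"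
  using trig_poly.scale[OF trig_poly.character[of 0], of c] by simp

lemma trig_poly_mult_character:
  assumes "trig_poly q" "\<And>j. k$j \<in> \<int>"
  shows "trig_poly (\<lambda>x. cis2pi (k \<bullet> x) * q x)"
  using assms(1)
proof induction
  case (character l)
  then show ?case
    using trig_poly.character[of "k + l"] assms(2) by (simp add: inner_add_left cis2pi_add)
next
  case (scale q c)
  then show ?case
    using trig_poly.scale[of _ c] by (simp add: mult.left_commute)
next
  case (add q r)
  then show ?case
    using trig_poly.add by (simp add: distrib_left)
qed

lemma trig_poly_mult:
  assumes "trig_poly p" "trig_poly q"
  shows "trig_poly (\<lambda>x. p x * q x)"
  using assms(1)
proof induction
  case (character k)
  then show ?case by (rule trig_poly_mult_character[OF assms(2)])
next
  case (scale p c)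
  then show ?case
    using trig_poly.scale[of _ c] by (simp add: mult.assoc)
next
  case (add p p')
  then show ?case
    using trig_poly.add by (simp add: distrib_right)
qed

lemma trig_poly_cnj: "trig_poly p \<Longrightarrow> trig_poly (\<lambda>x. cnj (p x))"
proof (induction rule: trig_poly.induct)
  case (character k)
  then show ?case
    using trig_poly.character[of "- k"] by (simp add: cnj_cis2pi)
next
  case (scale p c)
  then show ?case
    using trig_poly.scale[of _ "cnj c"] by simp
next
  case (add p q)
  then show ?case
    using trig_poly.add by simp
qed

lemma continuous_on_trig_poly: "trig_poly p \<Longrightarrow> continuous_on S p"
  by (induction rule: trig_poly.induct) (intro continuous_intros; assumption)+

section \<open>Orbit means away from the resonance hyperplanes\<close>

lemma norm_one_minus_cis2pi_lower_bound:
  assumes "\<delta> > 0"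
  obtains c where "c > 0" "\<And>t. (\<And>j::int. \<delta> \<le> \<bar>t - of_int j\<bar>) \<Longrightarrow> c \<le> norm (1 - cis2pi t)"
proof -
  define d where "d = min \<delta> (1/2)"
  have d: "0 < d" "d \<le> 1/2" "d \<le> \<delta>"
    using assms by (auto simp: d_def)
  have "{d..1-d} \<noteq> {}" "continuous_on {d..1-d} (\<lambda>s. norm (1 - cis2pi s))"
    using d by (auto intro!: continuous_intros)
  then obtain s0 where s0: "s0 \<in> {d..1-d}"
    and min: "\<And>s. s \<in> {d..1-d} \<Longrightarrow> norm (1 - cis2pi s0) \<le> norm (1 - cis2pi s)"
    using continuous_attains_inf[OF compact_Icc] by blast
  have "s0 \<notin> \<int>"
  proof
    assume "s0 \<in> \<int>"
    then obtain z :: int where "s0 = of_int z"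
      by (auto elim: Ints_cases)
    with s0 d have "0 < z" "z < 1"
      by (simp_all add: of_int_less_iff[symmetric])
    then show False by simp
  qed
  then have "norm (1 - cis2pi s0) > 0"
    by (simp add: cis2pi_eq_1_iff)
  moreover have "norm (1 - cis2pi s0) \<le> norm (1 - cis2pi t)"
    if "\<And>j::int. \<delta> \<le> \<bar>t - of_int j\<bar>" for t
  proof -
    have "frac t \<in> {d..1-d}"
      using that[of "\<lfloor>t\<rfloor>"] that[of "\<lfloor>t\<rfloor> + 1"] d by (auto simp: frac_def)
    then show ?thesis
      using min[of "frac t"] by (simp add: cis2pi_frac)
  qed
  ultimately show ?thesis
    using that by blast
qed

lemma infdist_hyperplane_le:
  fixes k v :: "'a::real_inner"
  assumes "k \<noteq> 0"
  shows "infdist v {x. k \<bullet> x = r} * norm k \<le> \<bar>k \<bullet> v - r\<bar>"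
proof -
  define y where "y = v - ((k \<bullet> v - r) / (k \<bullet> k)) *\<^sub>R k"
  have kk: "k \<bullet> k = norm k * norm k"
    by (simp flip: power2_norm_eq_inner power2_eq_square)
  have "k \<bullet> y = r"
    using assms by (simp add: y_def inner_diff_right)
  then have "infdist v {x. k \<bullet> x = r} \<le> dist v y"
    by (intro infdist_le) simp
  also have "dist v y = \<bar>k \<bullet> v - r\<bar> / \<bar>k \<bullet> k\<bar> * norm k"
    by (simp add: y_def dist_norm abs_divide)
  also have "\<dots> = \<bar>k \<bullet> v - r\<bar> / norm k"
    using assms unfolding kk by simp
  finally show ?thesis
    using assms by (simp add: field_simps)
qed

lemma norm_sum_powers_le:
  fixes w :: "'a::real_normed_field"
  assumes "norm w = 1" "w \<noteq> 1"
  shows "norm (\<Sum>m<M. w ^ m) \<le> 2 / norm (1 - w)"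
proof -
  have "(\<Sum>m<M. w ^ m) = (1 - w ^ M) / (1 - w)"
    using assms(2) by (simp add: sum_gp_strict)
  moreover have "norm (1 - w ^ M) \<le> 2"
    using norm_triangle_ineq4[of 1 "w ^ M"] assms(1) by (simp add: norm_power)
  ultimately show ?thesis
    using assms(2) by (simp add: norm_divide divide_right_mono)
qed

definition resonance_hyperplanes :: "(real^'n) set \<Rightarrow> (real^'n) set set" where
  "resonance_hyperplanes K = {{x. k \<bullet> x = of_int j} | k j. k \<in> K}"

definition nonresonant :: "(real^'n) set \<Rightarrow> real \<Rightarrow> (real^'n) set" where
  "nonresonant K \<eta> = {v. \<forall>h\<in>resonance_hyperplanes K. \<eta> < infdist v h}"

lemma nonresonant_antimono: "K \<subseteq> L \<Longrightarrow> nonresonant L \<eta> \<subseteq> nonresonant K \<eta>"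
  by (auto simp: nonresonant_def resonance_hyperplanes_def)

lemma nonresonant_far_from_integers:
  assumes "v \<in> nonresonant {k} \<eta>" "k \<noteq> 0"
  shows "\<eta> * norm k \<le> \<bar>k \<bullet> v - of_int j\<bar>"
proof -
  have "\<eta> < infdist v {x. k \<bullet> x = of_int j}"
    using assms(1) by (auto simp: nonresonant_def resonance_hyperplanes_def)
  then have "\<eta> * norm k \<le> infdist v {x. k \<bullet> x = of_int j} * norm k"
    by (simp add: mult_right_mono)
  also have "\<dots> \<le> \<bar>k \<bullet> v - of_int j\<bar>"
    by (rule infdist_hyperplane_le[OF assms(2)])
  finally show ?thesis .
qed

lemma norm_orbit_mean_character_le:
  fixes k :: "real^'n"
  assumes "c > 0" "c \<le> norm (1 - cis2pi (k \<bullet> v))"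
  shows "norm (orbit_mean M (\<lambda>x. cis2pi (k \<bullet> x)) v) \<le> (2 / c) / real M"
proof -
  have "cis2pi (k \<bullet> v) \<noteq> 1"
    using assms by auto
  then have "norm (\<Sum>m<M. cis2pi (k \<bullet> v) ^ m) \<le> 2 / norm (1 - cis2pi (k \<bullet> v))"
    by (intro norm_sum_powers_le) simp_all
  also have "\<dots> \<le> 2 / c"
    using assms by (intro divide_left_mono mult_pos_pos) auto
  finally have "norm (\<Sum>m<M. cis2pi (k \<bullet> v) ^ m) \<le> 2 / c" .
  moreover have "norm (orbit_mean M (\<lambda>x. cis2pi (k \<bullet> x)) v) = norm (\<Sum>m<M. cis2pi (k \<bullet> v) ^ m) / real M"
    by (simp add: orbit_mean_def cis2pi_power divide_inverse_commute)
  ultimately show ?thesis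
    by (metis divide_right_mono of_nat_0_le_iff)
qed

lemma uniform_limit_orbit_mean_character:
  fixes k :: "real^'n"
  assumes "k \<noteq> 0" "\<eta> > 0"
  shows "uniform_limit (nonresonant {k} \<eta>) (\<lambda>M. orbit_mean M (\<lambda>x. cis2pi (k \<bullet> x))) (\<lambda>_. 0) sequentially"
proof (rule uniform_limitI)
  fix \<epsilon> :: real
  assume "\<epsilon> > 0"
  obtain c where c: "c > 0" "\<And>t. (\<And>j::int. \<eta> * norm k \<le> \<bar>t - of_int j\<bar>) \<Longrightarrow> c \<le> norm (1 - cis2pi t)"
    using norm_one_minus_cis2pi_lower_bound[of "\<eta> * norm k"] assms by auto
  have bound: "norm (orbit_mean M (\<lambda>x. cis2pi (k \<bullet> x)) v) \<le> (2 / c) / real M"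
    if "v \<in> nonresonant {k} \<eta>" for v M
    using nonresonant_far_from_integers[OF that assms(1)] c
    by (intro norm_orbit_mean_character_le) auto
  have "\<forall>\<^sub>F M in sequentially. (2 / c) / real M < \<epsilon>"
    using order_tendstoD(2)[OF lim_const_over_n[of "2 / c"] \<open>\<epsilon> > 0\<close>] by simp
  then show "\<forall>\<^sub>F M in sequentially. \<forall>v\<in>nonresonant {k} \<eta>.
      dist (orbit_mean M (\<lambda>x. cis2pi (k \<bullet> x)) v) 0 < \<epsilon>"
    by eventually_elim (use bound in \<open>auto intro: order_le_less_trans\<close>)
qed

lemma uniform_limit_orbit_mean_trig_poly:
  assumes "trig_poly p"
  shows "\<exists>K. finite K \<and> 0 \<notin> K \<and> (\<forall>\<eta>>0. uniform_limit (nonresonant K \<eta>)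
           (\<lambda>M. orbit_mean M p) (\<lambda>_. integral (cbox 0 1) p) sequentially)"
  using assms
proof induction
  case (character k)
  show ?case
  proof (cases "k = 0")
    case True
    have "uniform_limit S (\<lambda>M. orbit_mean M (\<lambda>x. cis2pi (k \<bullet> x))) (\<lambda>_. 1) sequentially" for S
    proof (subst uniform_limit_cong)
      show "\<forall>\<^sub>F M in sequentially. \<forall>v\<in>S. orbit_mean M (\<lambda>x. cis2pi (k \<bullet> x)) v = 1"
        using eventually_gt_at_top[of 0] by eventually_elim (simp add: True orbit_mean_const)
    qed (rule refl, rule uniform_limit_const)
    then show ?thesis
      using True by (intro exI[of _ "{}"]) (simp add: content_unit_cube_cart)
  next
    case False
    then show ?thesis
      using uniform_limit_orbit_mean_character[OF False]
      by (intro exI[of _ "{k}"]) (simp add: integral_unit_cube_character character)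
  qed
next
  case (scale p c)
  then obtain K where K: "finite K" "0 \<notin> K"
    and lim: "\<And>\<eta>. \<eta> > 0 \<Longrightarrow> uniform_limit (nonresonant K \<eta>) (\<lambda>M. orbit_mean M p) (\<lambda>_. integral (cbox 0 1) p) sequentially"
    by blast
  have "orbit_mean M (\<lambda>x. c * p x) v = c * orbit_mean M p v" for M v
    by (rule orbit_mean_linear) (intro bounded_linear.linear bounded_linear_mult_right)
  then show ?case
    using K bounded_linear.uniform_limit[OF bounded_linear_mult_right lim]
    by (intro exI[of _ K]) simp
next
  case (add p q)
  then obtain K L where KL: "finite K" "0 \<notin> K" "finite L" "0 \<notin> L"
    and lim: "\<And>\<eta>. \<eta> > 0 \<Longrightarrow> uniform_limit (nonresonant K \<eta>) (\<lambda>M. orbit_mean M p) (\<lambda>_. integral (cbox 0 1) p) sequentially"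
      "\<And>\<eta>. \<eta> > 0 \<Longrightarrow> uniform_limit (nonresonant L \<eta>) (\<lambda>M. orbit_mean M q) (\<lambda>_. integral (cbox 0 1) q) sequentially"
    by blast
  have "integral (cbox 0 1) (\<lambda>x. p x + q x) = integral (cbox 0 1) p + integral (cbox 0 1) q"
    using add.hyps by (intro integral_add integrable_continuous continuous_on_trig_poly)
  moreover have "uniform_limit (nonresonant (K \<union> L) \<eta>) (\<lambda>M v. orbit_mean M p v + orbit_mean M q v)
      (\<lambda>_. integral (cbox 0 1) p + integral (cbox 0 1) q) sequentially" if "\<eta> > 0" for \<eta>
    using lim[OF that, THEN uniform_limit_on_subset, OF nonresonant_antimono]
    by (intro uniform_limit_add) auto
  ultimately show ?case
    using KL by (intro exI[of _ "K \<union> L"]) (simp add: orbit_mean_add)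
qed

section \<open>Density of trigonometric polynomials\<close>

lemma continuous_on_compact_quotient:
  fixes q :: "'a::topological_space \<Rightarrow> 'b::metric_space" and g :: "'b \<Rightarrow> 'c::topological_space"
  assumes "compact C" "continuous_on C q" "continuous_on C (g \<circ> q)"
  shows "continuous_on (q ` C) g"
proof -
  have "quotient_map (top_of_set C) (top_of_set (q ` C)) q"
    using assms(1,2)
    by (intro continuous_imp_quotient_map) (auto simp: compact_space_subtopology Hausdorff_space_subtopology)
  then show ?thesis
    using assms(3) continuous_compose_quotient_map[of "top_of_set C" "top_of_set (q ` C)" q euclidean g]
    by simp
qed

definition torus_embedding :: "real^'n \<Rightarrow> complex^'n" where
  "torus_embedding x = (\<chi> j. cis2pi (x$j))"

lemma continuous_on_torus_embedding: "continuous_on S torus_embedding"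
  unfolding torus_embedding_def by (intro continuous_intros)

lemma torus_embedding_eq_iff: "torus_embedding x = torus_embedding y \<longleftrightarrow> (\<forall>j. (x - y)$j \<in> \<int>)"
  by (simp add: torus_embedding_def vec_eq_iff cis2pi_eq_iff)

lemma range_torus_embedding: "range torus_embedding = torus_embedding ` cbox 0 1"
proof -
  have "torus_embedding x = torus_embedding (torus_proj x)" for x
    by (simp add: torus_embedding_def torus_proj_def cis2pi_frac)
  then show ?thesis
    using torus_proj_in_cube torus_cube_ae_cbox(1) by blast
qed

lemma trig_poly_dense:
  fixes f :: "real^'n \<Rightarrow> real"
  assumes f: "torus_continuous f" and "e > 0"
  obtains p where "trig_poly p" "\<And>x. \<bar>f x - Re (p x)\<bar> < e"
proof -
  define S where "S = range (torus_embedding :: real^'n \<Rightarrow> complex^'n)"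
  define g where "g z = f (SOME x. torus_embedding x = z)" for z
  have g: "g (torus_embedding x) = f x" for x
  proof -
    define y where "y = (SOME y. torus_embedding y = torus_embedding x)"
    have "torus_embedding y = torus_embedding x"
      unfolding y_def by (rule someI) simp
    then have "\<forall>j. (y - x)$j \<in> \<int>"
      by (simp add: torus_embedding_eq_iff)
    then have "f (x + (y - x)) = f x"
      using f unfolding torus_continuous_def by blast
    then show ?thesis
      by (simp add: g_def y_def)
  qed
  have "continuous_on (cbox 0 1) (g \<circ> torus_embedding)"
    using f by (auto simp: o_def g torus_continuous_def intro: continuous_on_subset)
  then have "continuous_on S g"
    unfolding S_def range_torus_embedding
    by (intro continuous_on_compact_quotient continuous_on_torus_embedding) simp_all
  text \<open>Stone--Weierstrass on the compact image of the torus, where continuous periodic functions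
    become continuous functions.\<close>
  define R where "R = {h. continuous_on S h \<and> (\<exists>p. trig_poly p \<and> (\<forall>x. h (torus_embedding x) = Re (p x)))}"
  have "function_ring_on R S"
  proof
    show "compact S"
      unfolding S_def range_torus_embedding
      by (intro compact_continuous_image continuous_on_torus_embedding compact_cbox)
  next
    fix h
    assume "h \<in> R"
    then show "continuous_on S h" by (simp add: R_def)
  next
    fix h h'
    assume "h \<in> R" "h' \<in> R"
    then obtain p p' where "trig_poly p" "trig_poly p'" "continuous_on S h" "continuous_on S h'"
      and "\<And>x. h (torus_embedding x) = Re (p x)" "\<And>x. h' (torus_embedding x) = Re (p' x)"
      by (auto simp: R_def)
    moreover have "Re ((1/2) * (p x * (p' x + cnj (p' x)))) = Re (p x) * Re (p' x)" for x
      by (simp add: complex_add_cnj)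
    moreover have "trig_poly (\<lambda>x. (1/2) * (p x * (p' x + cnj (p' x))))"
      using calculation(1,2) by (intro trig_poly.scale trig_poly_mult trig_poly.add trig_poly_cnj)
    moreover have "trig_poly (\<lambda>x. p x + p' x)"
      using calculation(1,2) by (rule trig_poly.add)
    ultimately show "(\<lambda>z. h z + h' z) \<in> R" "(\<lambda>z. h z * h' z) \<in> R"
      unfolding R_def by (auto intro!: continuous_on_add continuous_on_mult)
  next
    fix c :: real
    show "(\<lambda>_. c) \<in> R"
      unfolding R_def using trig_poly_const[of "of_real c"] by auto
  next
    fix z w
    assume "z \<in> S" "w \<in> S" "z \<noteq> w"
    then obtain j where j: "z$j \<noteq> w$j"
      by (meson vec_eq_iff)
    have "trig_poly (\<lambda>x. c * cis2pi (axis j 1 \<bullet> x))" for c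
      by (intro trig_poly.scale trig_poly.character) (simp add: axis_def)
    then have char: "trig_poly (\<lambda>x. c * cis2pi (x$j))" for c
      by (simp add: inner_axis')
    have cont: "continuous_on S (\<lambda>u. u$j)"
      by (intro continuous_on_component continuous_on_id)
    have ReR: "(\<lambda>u. Re (u$j)) \<in> R"
      unfolding R_def torus_embedding_def using char[of 1] continuous_on_Re[OF cont]
      by (intro CollectI conjI exI[of _ "\<lambda>x. 1 * cis2pi (x$j)"]) auto
    have ImR: "(\<lambda>u. Im (u$j)) \<in> R"
      unfolding R_def torus_embedding_def using char[of "- \<i>"] continuous_on_Im[OF cont]
      by (intro CollectI conjI exI[of _ "\<lambda>x. - \<i> * cis2pi (x$j)"]) auto
    show "\<exists>h\<in>R. h z \<noteq> h w"
    proof (cases "Re (z$j) = Re (w$j)")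
      case True
      then have "Im (z$j) \<noteq> Im (w$j)"
        using j by (simp add: complex_eq_iff)
      then show ?thesis
        using ImR by (auto intro!: bexI[of _ "\<lambda>u. Im (u$j)"])
    next
      case False
      then show ?thesis
        using ReR by (auto intro!: bexI[of _ "\<lambda>u. Re (u$j)"])
    qed
  qed
  then obtain h where "h \<in> R" and h: "\<forall>z\<in>S. \<bar>g z - h z\<bar> < e"
    using function_ring_on.Stone_Weierstrass_basic[OF _ \<open>continuous_on S g\<close> \<open>e > 0\<close>] by blast
  then obtain p where "trig_poly p" "\<And>x. h (torus_embedding x) = Re (p x)"
    by (auto simp: R_def)
  then show ?thesis
    using that h g by (simp add: S_def)
qed

section \<open>Weak-* convergence of orbit averages\<close>

lemma orbit_mean_approximates_integral:
  fixes f :: "real^'n \<Rightarrow> real"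
  assumes f: "torus_continuous f" and "\<epsilon> > 0"
  obtains K where "finite K" "0 \<notin> K"
    "\<And>\<eta>. \<eta> > 0 \<Longrightarrow> \<forall>\<^sub>F M in sequentially. \<forall>v\<in>nonresonant K \<eta>.
        \<bar>orbit_mean M f v - integral (cbox 0 1) f\<bar> < \<epsilon>"
proof -
  obtain p where p: "trig_poly p" and approx: "\<And>x. \<bar>f x - Re (p x)\<bar> < \<epsilon> / 3"
    using trig_poly_dense[OF f, of "\<epsilon> / 3"] \<open>\<epsilon> > 0\<close> by auto
  obtain K where K: "finite K" "0 \<notin> K" and lim: "\<And>\<eta>. \<eta> > 0 \<Longrightarrow>
      uniform_limit (nonresonant K \<eta>) (\<lambda>M. orbit_mean M p) (\<lambda>_. integral (cbox 0 1) p) sequentially"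
    using uniform_limit_orbit_mean_trig_poly[OF p] by blast
  define I where "I = integral (cbox 0 1) p"
  have cont_f: "continuous_on (cbox 0 1) f"
    using f continuous_on_subset by (auto simp: torus_continuous_def)
  have cont_p: "continuous_on (cbox 0 1) p" "continuous_on (cbox 0 1) (\<lambda>x. Re (p x))"
    using p by (auto intro: continuous_on_trig_poly continuous_on_Re)
  have "Re I - integral (cbox 0 1) f = integral (cbox 0 1) (\<lambda>x. Re (p x) - f x)"
    using integral_linear[OF integrable_continuous[OF cont_p(1)] bounded_linear_Re]
    by (simp add: I_def o_def integral_diff integrable_continuous cont_f cont_p)
  also have "norm \<dots> \<le> \<epsilon> / 3 * Henstock_Kurzweil_Integration.content (cbox 0 (1::real^'n))"
    using approx \<open>\<epsilon> > 0\<close> continuous_on_diff[OF cont_p(2) cont_f]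
    by (intro has_integral_bound[OF _ integrable_integral] integrable_continuous)
       (auto simp: abs_minus_commute less_imp_le)
  finally have mean: "\<bar>Re I - integral (cbox 0 1) f\<bar> \<le> \<epsilon> / 3"
    by (simp add: content_unit_cube_cart)
  show ?thesis
  proof (rule that[OF K])
    fix \<eta> :: real
    assume "\<eta> > 0"
    have "\<forall>\<^sub>F M in sequentially. \<forall>v\<in>nonresonant K \<eta>. dist (orbit_mean M p v) I < \<epsilon> / 3"
      using uniform_limitD[OF lim[OF \<open>\<eta> > 0\<close>], of "\<epsilon> / 3"] \<open>\<epsilon> > 0\<close> by (simp add: I_def)
    with eventually_gt_at_top[of 0]
    show "\<forall>\<^sub>F M in sequentially. \<forall>v\<in>nonresonant K \<eta>. \<bar>orbit_mean M f v - integral (cbox 0 1) f\<bar> < \<epsilon>"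
    proof eventually_elim
      case (elim M)
      show ?case
      proof
        fix v
        assume "v \<in> nonresonant K \<eta>"
        then have "\<bar>Re (orbit_mean M p v) - Re I\<bar> < \<epsilon> / 3"
          using elim(2) abs_Re_le_cmod[of "orbit_mean M p v - I"] by (auto simp: dist_norm)
        moreover have "norm (orbit_mean M f v - orbit_mean M (\<lambda>x. Re (p x)) v) \<le> \<epsilon> / 3"
          using approx elim(1) by (intro norm_orbit_mean_diff_le) (simp add: less_imp_le)
        moreover have "orbit_mean M (\<lambda>x. Re (p x)) v = Re (orbit_mean M p v)"
          by (intro orbit_mean_linear bounded_linear.linear bounded_linear_Re)
        ultimately show "\<bar>orbit_mean M f v - integral (cbox 0 1) f\<bar> < \<epsilon>"
          using mean unfolding real_norm_def by linarith
      qed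
    qed
  qed
qed

lemma orbit_average_eventually_close:
  fixes F :: "(real^'n \<Rightarrow> real) set"
  assumes "finite F" "\<forall>f\<in>F. torus_continuous f" "e > 0"
  shows "\<exists>K. finite K \<and> 0 \<notin> K \<and> (\<forall>\<eta>>0. \<forall>\<^sub>F M in sequentially. \<forall>v\<in>nonresonant K \<eta>. \<forall>f\<in>F.
           \<bar>integral\<^sup>L (orbit_average M v) f - integral\<^sup>L torus_leb f\<bar> < e)"
  using assms(1,2)
proof (induction F rule: finite_induct)
  case empty
  show ?case
    by (intro exI[of _ "{}"]) simp
next
  case (insert f F)
  then obtain K where K: "finite K" "0 \<notin> K" and close_K: "\<And>\<eta>. \<eta> > 0 \<Longrightarrow>
      \<forall>\<^sub>F M in sequentially. \<forall>v\<in>nonresonant K \<eta>. \<forall>g\<in>F.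
        \<bar>integral\<^sup>L (orbit_average M v) g - integral\<^sup>L torus_leb g\<bar> < e"
    by auto
  have f: "torus_continuous f"
    using insert.prems by simp
  obtain L where L: "finite L" "0 \<notin> L" and close_L: "\<And>\<eta>. \<eta> > 0 \<Longrightarrow>
      \<forall>\<^sub>F M in sequentially. \<forall>v\<in>nonresonant L \<eta>. \<bar>orbit_mean M f v - integral (cbox 0 1) f\<bar> < e"
    using orbit_mean_approximates_integral[OF f \<open>e > 0\<close>] by blast
  have "\<forall>\<^sub>F M in sequentially. \<forall>v\<in>nonresonant (K \<union> L) \<eta>. \<forall>g\<in>insert f F.
      \<bar>integral\<^sup>L (orbit_average M v) g - integral\<^sup>L torus_leb g\<bar> < e" if "\<eta> > 0" for \<eta>
    using close_K[OF that] close_L[OF that] eventually_gt_at_top[of 0]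
  proof eventually_elim
    case (elim M)
    show ?case
    proof (intro ballI)
      fix v g
      assume v: "v \<in> nonresonant (K \<union> L) \<eta>" and g: "g \<in> insert f F"
      show "\<bar>integral\<^sup>L (orbit_average M v) g - integral\<^sup>L torus_leb g\<bar> < e"
      proof (cases "g = f")
        case True
        have "integral\<^sup>L (orbit_average M v) f = orbit_mean M f v"
          by (rule integral_orbit_average[OF elim(3) f])
        moreover have "integral\<^sup>L torus_leb f = integral (cbox 0 1) f"
          using f by (intro integral_torus_leb) (simp add: torus_continuous_def)
        moreover have "v \<in> nonresonant L \<eta>"
          using v nonresonant_antimono[of L "K \<union> L"] by blast
        ultimately show ?thesis
          using elim(2) True by simp
      next
        case False
        moreover have "v \<in> nonresonant K \<eta>"
          using v nonresonant_antimono[of K "K \<union> L"] by blast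
        ultimately show ?thesis
          using elim(1) g by simp
      qed
    qed
  qed
  then show ?case
    using K L by (intro exI[of _ "K \<union> L"]) auto
qed

lemma affine_hyperplane_resonance_hyperplanes:
  assumes "0 \<notin> K" "h \<in> resonance_hyperplanes K"
  shows "affine_hyperplane h"
proof -
  obtain k j where "k \<in> K" "h = {x. k \<bullet> x = of_int j}"
    using assms(2) by (auto simp: resonance_hyperplanes_def)
  then show ?thesis
    using assms(1) unfolding affine_hyperplane_def by (intro exI[of _ k] exI[of _ "of_int j"]) auto
qed

lemma locally_finite_resonance_hyperplanes:
  fixes K :: "(real^'n) set"
  assumes K: "finite K" "0 \<notin> K"
  shows "locally_finite_family (resonance_hyperplanes K)"
  unfolding locally_finite_family_def
proof
  fix x :: "real^'n"
  define J where "J = (\<Union>k\<in>K. {j::int. \<bar>of_int j - k \<bullet> x\<bar> < norm k})"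
  have "finite {j::int. \<bar>of_int j - c\<bar> < r}" for c r :: real
    by (rule finite_subset[of _ "{\<lceil>c - r\<rceil>..\<lfloor>c + r\<rfloor>}"])
       (auto simp: ceiling_le_iff le_floor_iff abs_less_iff)
  then have "finite J"
    using K(1) by (simp add: J_def)
  have "{h \<in> resonance_hyperplanes K. h \<inter> ball x 1 \<noteq> {}} \<subseteq> (\<lambda>(k, j). {y. k \<bullet> y = of_int j}) ` (K \<times> J)"
  proof
    fix h
    assume "h \<in> {h \<in> resonance_hyperplanes K. h \<inter> ball x 1 \<noteq> {}}"
    then obtain k j where h: "h = {y. k \<bullet> y = of_int j}" and "k \<in> K" "h \<inter> ball x 1 \<noteq> {}"
      by (auto simp: resonance_hyperplanes_def)
    then obtain y where "y \<in> ball x 1" "k \<bullet> y = of_int j"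
      by auto
    have "\<bar>of_int j - k \<bullet> x\<bar> = \<bar>k \<bullet> (y - x)\<bar>"
      using \<open>k \<bullet> y = of_int j\<close> by (simp add: inner_diff_right)
    also have "\<dots> \<le> norm k * norm (y - x)"
      by (rule Cauchy_Schwarz_ineq2)
    also have "\<dots> < norm k"
    proof -
      have "norm (y - x) < 1" "0 < norm k"
        using K(2) \<open>k \<in> K\<close> \<open>y \<in> ball x 1\<close> by (auto simp: dist_norm norm_minus_commute)
      then show ?thesis
        using mult_strict_left_mono[of "norm (y - x)" 1 "norm k"] by simp
    qed
    finally have "\<bar>of_int j - k \<bullet> x\<bar> < norm k" .
    with \<open>k \<in> K\<close> show "h \<in> (\<lambda>(k, j). {y. k \<bullet> y = of_int j}) ` (K \<times> J)"
      unfolding h by (force simp: J_def)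
  qed
  then show "\<exists>r>0. finite {h \<in> resonance_hyperplanes K. h \<inter> ball x r \<noteq> {}}"
    using K(1) \<open>finite J\<close> by (intro exI[of _ 1]) (auto elim!: finite_subset)
qed

lemma weak_star_ball_contains_nbhd:
  fixes D :: "(real^'n) measure \<Rightarrow> (real^'n) measure \<Rightarrow> real"
  assumes "Metric_space torus_prob_measures D"
    and "\<And>U. openin (Metric_space.mtopology torus_prob_measures D) U \<longleftrightarrow> weak_star_open U"
    and "\<epsilon> > 0"
  obtains F e where "finite F" "\<forall>f\<in>F. torus_continuous f" "e > 0"
    "\<And>\<nu>. \<nu> \<in> torus_prob_measures \<Longrightarrow> \<forall>f\<in>F. \<bar>integral\<^sup>L \<nu> f - integral\<^sup>L torus_leb f\<bar> < e \<Longrightarrow>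
        D \<nu> torus_leb < \<epsilon>"
proof -
  interpret Metric_space torus_prob_measures D by (rule assms(1))
  have "weak_star_open (mball torus_leb \<epsilon>)" "torus_leb \<in> mball torus_leb \<epsilon>"
    using assms(2,3) torus_leb_in_torus_prob_measures by auto
  then obtain F e where F: "finite F" "\<forall>f\<in>F. torus_continuous f" "e > 0"
    and nbhd: "{\<nu>\<in>torus_prob_measures. \<forall>f\<in>F. \<bar>integral\<^sup>L \<nu> f - integral\<^sup>L torus_leb f\<bar> < e}
      \<subseteq> mball torus_leb \<epsilon>"
    unfolding weak_star_open_def by blast
  show ?thesis
    using nbhd by (intro that[OF F]) (auto simp: commute)
qed

theorem lemma3p8:
  fixes D :: "(real^'n) measure \<Rightarrow> (real^'n) measure \<Rightarrow> real"
  assumes metric: "Metric_space torus_prob_measures D"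
    and generates: "\<And>U. openin (Metric_space.mtopology torus_prob_measures D) U
                          \<longleftrightarrow> weak_star_open U"
    and eps: "\<epsilon> > 0"
  shows "\<exists>Hs. (\<forall>h\<in>Hs. affine_hyperplane h) \<and> locally_finite_family Hs \<and>
           (\<forall>\<eta>>0. \<exists>M0::nat. \<forall>v::real^'n. \<forall>M::nat.
              (\<forall>h\<in>Hs. infdist v h > \<eta>) \<and> M \<ge> M0 \<and> M > 0 \<longrightarrow>
              D (orbit_average M v) torus_leb < \<epsilon>)"
proof -
  obtain F e where F: "finite F" "\<forall>f\<in>F. torus_continuous f" "e > 0"
    and close_D: "\<And>\<nu>. \<nu> \<in> torus_prob_measures \<Longrightarrow>
      \<forall>f\<in>F. \<bar>integral\<^sup>L \<nu> f - integral\<^sup>L torus_leb f\<bar> < e \<Longrightarrow> D \<nu> torus_leb < \<epsilon>"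
    using weak_star_ball_contains_nbhd[OF metric generates eps] by blast
  obtain K where K: "finite K" "0 \<notin> K" and close: "\<And>\<eta>. \<eta> > 0 \<Longrightarrow>
      \<forall>\<^sub>F M in sequentially. \<forall>v\<in>nonresonant K \<eta>. \<forall>f\<in>F.
        \<bar>integral\<^sup>L (orbit_average M v) f - integral\<^sup>L torus_leb f\<bar> < e"
    using orbit_average_eventually_close[OF F] by blast
  show ?thesis
  proof (intro exI[of _ "resonance_hyperplanes K"] conjI allI impI)
    show "\<forall>h\<in>resonance_hyperplanes K. affine_hyperplane h"
      using affine_hyperplane_resonance_hyperplanes[OF K(2)] by blast
    show "locally_finite_family (resonance_hyperplanes K)"
      by (rule locally_finite_resonance_hyperplanes[OF K])
    fix \<eta> :: real
    assume "\<eta> > 0"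
    then obtain M0 where M0: "\<And>M. M \<ge> M0 \<Longrightarrow> \<forall>v\<in>nonresonant K \<eta>. \<forall>f\<in>F.
        \<bar>integral\<^sup>L (orbit_average M v) f - integral\<^sup>L torus_leb f\<bar> < e"
      using close unfolding eventually_sequentially by blast
    have "D (orbit_average M v) torus_leb < \<epsilon>" if "v \<in> nonresonant K \<eta>" "M \<ge> M0" "M > 0" for v M
      using close_D[OF orbit_average_in_torus_prob_measures[OF \<open>M > 0\<close>]] M0[OF \<open>M \<ge> M0\<close>] that(1)
      by blast
    then show "\<exists>M0. \<forall>v M. (\<forall>h\<in>resonance_hyperplanes K. \<eta> < infdist v h) \<and> M0 \<le> M \<and> 0 < M \<longrightarrow>
        D (orbit_average M v) torus_leb < \<epsilon>"
      unfolding nonresonant_def by blast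
  qed
qed

end
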